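(* Let $(x^J_{i,k})$ be generated by the interleaved consensus and projected gradient descent iteration described in the context, under the standing assumptions, with SLC constant $M>0$ and BUC constant $\bar M>0$, and with each $B_k$ a nonnegative doubly stochastic matrix. Then for every $y\in\mathcal{X}$ and every $k\ge 0$, $$\eta_{k+1}^2 \le (1+\gamma_k)\,\eta_k^2 - 2\alpha_k M\big(f(\bar{x}_{0,k})-f(y)\big) + \alpha_k^2\,(C_1^2+C_2^2+C_3^2) + \alpha_k C_4 \max_{J}\|\delta^J_k\|,$$ where $\eta_k^2=\sum_{J=1}^S\|x^J_{0,k}-y\|^2$, $\gamma_k=\frac{1}{S}\big(2\alpha_k^2\bar M^2\,\mathbf{N}\,\mathbf{L}+\alpha_k\bar M\,\mathbf{N}\max_J\|\delta^J_k\|\big)$, $C_1^2=\sum_{i=1}^{\Delta}\sum_{J=1}^S\big(\sum_{h=1}^C|W_{i-1,k}[J,h]|\,L_h\big)^2$, $C_2^2=4(\bar M\mathbf{L})^2$, $C_3^2=2\bar M^2\mathbf{N}\mathbf{L}$, and $C_4=\bar M(2\mathbf{L}+\mathbf{N})$.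
   Context: Standing setup. Integers $S\ge1$ (servers), $C\ge1$ (clients), $D\ge1$, $\Delta\ge1$. $\mathcal{X}\subseteq\mathbb{R}^D$ is a nonempty convex compact set and $\mathcal{P}_{\mathcal{X}}$ is Euclidean projection onto $\mathcal{X}$. For $h=1,\dots,C$, $f_h:\mathbb{R}^D\to\mathbb{R}$ is continuously differentiable and convex with gradient $g_h$; there are constants $L_h$ with $\|g_h(x)\|\le L_h$ for all $x\in\mathcal{X}$ and constants $N_h>0$ with $\|g_h(x)-g_h(y)\|\le N_h\|x-y\|$ for all $x,y\in\mathcal{X}$. Set $\mathbf{L}=\sum_h L_h$, $\mathbf{N}=\sum_h N_h$, $f=\sum_{h=1}^C f_h$, $f^*=\min_{x\in\mathcal{X}}f(x)$, $\mathcal{X}^*=\{x\in\mathcal{X}: f(x)=f^*\}$, $\mathrm{dist}(x,\mathcal{X}^* )=\inf_{x^*\in\mathcal{X}^*}\|x-x^*\|$. Norms are Euclidean. Step sizes $\alpha_k>0$. Weight matrices $W_{i,k}\in\mathbb{R}^{S\times C}$ ($0\le i\le\Delta-1$, $k\ge0$), entries possibly negative. Symmetric Learning Condition (SLC): there is $M>0$ with $\sum_{i=1}^{\Delta}\sum_{J=1}^S W_{i-1,k}[J,h]=M$ for all $k\ge0$ and all $h$. Bounded Update Condition (BUC): there is $\bar M>0$ with $\sum_{i=1}^{\Delta}\sum_{J=1}^S |W_{i-1,k}[J,h]|\le\bar M$ for all $k,h$. Consensus matrices $B_k\in\mathbb{R}^{S\times S}$ have nonnegative entries. Iteration: given $x^J_{0,0}\in\mathcal{X}$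 ($J=1,\dots,S$), for each $k\ge0$ and $i=1,\dots,\Delta$, $x^J_{i,k}=\mathcal{P}_{\mathcal{X}}\big[x^J_{i-1,k}-\alpha_k\sum_{h=1}^C W_{i-1,k}[J,h]\,g_h(x^J_{i-1,k})\big]$, and then $x^I_{0,k+1}=\sum_{J=1}^S B_k[I,J]\,x^J_{\Delta,k}$. Averages: $\bar x_{i,k}=\frac1S\sum_{J=1}^S x^J_{i,k}$; disagreements: $\delta^J_k=x^J_{0,k}-\bar x_{0,k}$. *)

theory Defs
  imports "HOL-Analysis.Analysis"
begin

end

theory Submission
  imports Defs
begin

text \<open>
  A projected step is nonexpansive towards any y \<in> X, so each local step decreases
  \<parallel>x - y\<parallel>^2 by 2\<alpha>\<langle>d, x - y\<rangle> up to \<alpha>^2\<parallel>d\<parallel>^2, and mixing with a doubly stochastic matrix does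
  not increase \<Sum>_J \<parallel>x^J - y\<parallel>^2 (Jensen for the squared norm).  All local iterates of a round
  stay within \<rho> = \<alpha> Mbar L + max_J \<parallel>\<delta>^J\<parallel> of the server average xbar, so, the gradients being
  bounded and Lipschitz, each correlation \<langle>g_h(x), x - y\<rangle> is within (L_h + N_h \<parallel>xbar - y\<parallel>) \<rho>
  of \<langle>g_h(xbar), xbar - y\<rangle> \<ge> f_h(xbar) - f_h(y).  After weighting, SLC turns the main terms
  into M (f(xbar) - f(y)) and BUC bounds the errors.  The error linear in r = \<parallel>xbar - y\<parallel>
  is absorbed by 2r \<le> 1 + r^2 together with r^2 \<le> \<eta>^2/S, which produces the factor 1 + \<gamma>.
\<close>

lemma norm_sq_convex_combination_le:
  fixes v :: "'b \<Rightarrow> 'a::real_normed_vector"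
  assumes "finite A" "A \<noteq> {}" "\<And>i. i \<in> A \<Longrightarrow> w i \<ge> 0" "sum w A = 1"
  shows "(norm (\<Sum>i\<in>A. w i *\<^sub>R v i))\<^sup>2 \<le> (\<Sum>i\<in>A. w i * (norm (v i))\<^sup>2)"
proof -
  have "norm (\<Sum>i\<in>A. w i *\<^sub>R v i) \<le> (\<Sum>i\<in>A. w i * norm (v i))"
    using norm_sum[of "\<lambda>i. w i *\<^sub>R v i" A] assms(3) by simp
  then have "(norm (\<Sum>i\<in>A. w i *\<^sub>R v i))\<^sup>2 \<le> (\<Sum>i\<in>A. w i * norm (v i))\<^sup>2"
    by (simp add: power_mono)
  also have "\<dots> \<le> (\<Sum>i\<in>A. w i * (norm (v i))\<^sup>2)"
    using convex_on_sum[OF assms(1,2) convex_power2 assms(4) assms(3)] by simp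
  finally show ?thesis .
qed

lemma doubly_stochastic_sum_sq_dist_le:
  fixes v :: "'b \<Rightarrow> 'a::real_normed_vector"
  assumes "finite A"
    and nonneg: "\<And>I J. I \<in> A \<Longrightarrow> J \<in> A \<Longrightarrow> B I J \<ge> 0"
    and rows: "\<And>I. I \<in> A \<Longrightarrow> (\<Sum>J\<in>A. B I J) = 1"
    and cols: "\<And>J. J \<in> A \<Longrightarrow> (\<Sum>I\<in>A. B I J) = 1"
  shows "(\<Sum>I\<in>A. (norm ((\<Sum>J\<in>A. B I J *\<^sub>R v J) - y))\<^sup>2) \<le> (\<Sum>J\<in>A. (norm (v J - y))\<^sup>2)"
proof -
  have row_bound: "(norm ((\<Sum>J\<in>A. B I J *\<^sub>R v J) - y))\<^sup>2 \<le> (\<Sum>J\<in>A. B I J * (norm (v J - y))\<^sup>2)"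
    if I: "I \<in> A" for I
  proof -
    have "(\<Sum>J\<in>A. B I J *\<^sub>R v J) - y = (\<Sum>J\<in>A. B I J *\<^sub>R (v J - y))"
      using rows[OF I] by (simp add: scaleR_right_diff_distrib sum_subtractf flip: scaleR_sum_left)
    then show ?thesis
      using norm_sq_convex_combination_le[OF \<open>finite A\<close> _ nonneg[OF I] rows[OF I], where v = "\<lambda>J. v J - y"] I
      by auto
  qed
  have "(\<Sum>I\<in>A. (norm ((\<Sum>J\<in>A. B I J *\<^sub>R v J) - y))\<^sup>2) \<le> (\<Sum>I\<in>A. \<Sum>J\<in>A. B I J * (norm (v J - y))\<^sup>2)"
    by (rule sum_mono) (rule row_bound)
  also have "\<dots> = (\<Sum>J\<in>A. (\<Sum>I\<in>A. B I J) * (norm (v J - y))\<^sup>2)"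
    unfolding sum_distrib_right by (rule sum.swap)
  also have "\<dots> = (\<Sum>J\<in>A. (norm (v J - y))\<^sup>2)"
    using cols by simp
  finally show ?thesis .
qed

lemma convex_on_above_tangent_inner:
  fixes f :: "'a::real_inner \<Rightarrow> real"
  assumes convex: "convex_on UNIV f" and deriv: "(f has_derivative (\<lambda>v. G \<bullet> v)) (at x)"
  shows "G \<bullet> (y - x) \<le> f y - f x"
proof -
  define \<phi> where "\<phi> t = f (x + t *\<^sub>R (y - x))" for t :: real
  have "convex_on UNIV \<phi>"
  proof (rule convex_onI)
    fix t s u :: real assume t: "0 < t" "t < 1"
    have "x + ((1 - t) * s + t * u) *\<^sub>R (y - x)
        = (1 - t) *\<^sub>R (x + s *\<^sub>R (y - x)) + t *\<^sub>R (x + u *\<^sub>R (y - x))"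
      by (simp add: algebra_simps)
    then show "\<phi> ((1 - t) *\<^sub>R s + t *\<^sub>R u) \<le> (1 - t) * \<phi> s + t * \<phi> u"
      unfolding \<phi>_def using convex_onD[OF convex, of t] t by simp
  qed simp
  moreover have "((\<lambda>t. x + t *\<^sub>R (y - x)) has_derivative (\<lambda>t. t *\<^sub>R (y - x))) (at 0)"
    by (auto intro!: derivative_eq_intros)
  from has_derivative_compose[OF this, of f "\<lambda>v. G \<bullet> v"] deriv
  have "(\<phi> has_derivative (\<lambda>t. t * (G \<bullet> (y - x)))) (at 0)"
    unfolding \<phi>_def by simp
  then have "(\<phi> has_field_derivative G \<bullet> (y - x)) (at 0 within UNIV)"
    by (simp add: has_field_derivative_def mult.commute[of _ "G \<bullet> (y - x)"])
  ultimately have "G \<bullet> (y - x) * (1 - 0) \<le> \<phi> 1 - \<phi> 0"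
    by (intro convex_on_imp_above_tangent) auto
  then show ?thesis unfolding \<phi>_def by simp
qed

lemma telescoping_le:
  fixes u t :: "nat \<Rightarrow> real"
  assumes "\<And>i. i \<in> {1..n} \<Longrightarrow> u i \<le> u (i - 1) + t i"
  shows "u n \<le> u 0 + (\<Sum>i\<in>{1..n}. t i)"
  using assms
proof (induction n)
  case (Suc n)
  have "u (Suc n) \<le> u n + t (Suc n)" using Suc.prems[of "Suc n"] by simp
  moreover have "u n \<le> u 0 + (\<Sum>i\<in>{1..n}. t i)" using Suc by simp
  ultimately show ?case by (simp add: sum.cl_ivl_Suc)
qed simp

lemma closest_point_step_sq_dist_le:
  fixes u d y :: "'a::{real_inner,heine_borel}"
  assumes "convex X" "closed X" "X \<noteq> {}" "y \<in> X"
  shows "(norm (closest_point X (u - a *\<^sub>R d) - y))\<^sup>2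
           \<le> (norm (u - y))\<^sup>2 - 2 * a * (d \<bullet> (u - y)) + a\<^sup>2 * (norm d)\<^sup>2"
proof -
  have "norm (closest_point X (u - a *\<^sub>R d) - y) \<le> norm ((u - y) - a *\<^sub>R d)"
    using closest_point_lipschitz[OF assms(1-3), of "u - a *\<^sub>R d" y] closest_point_self[OF assms(4)]
    by (simp add: dist_norm algebra_simps)
  then have "(norm (closest_point X (u - a *\<^sub>R d) - y))\<^sup>2 \<le> (norm ((u - y) - a *\<^sub>R d))\<^sup>2"
    by (simp add: power_mono)
  also have "\<dots> = (norm (u - y))\<^sup>2 - 2 * a * (d \<bullet> (u - y)) + a\<^sup>2 * (norm d)\<^sup>2"
    unfolding power2_norm_eq_inner
    by (simp add: inner_diff_left inner_diff_right inner_commute algebra_simps power2_eq_square)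
  finally show ?thesis .
qed

lemma closest_point_step_dist_le:
  fixes u v :: "'a::{real_inner,heine_borel}"
  assumes "convex X" "closed X" "X \<noteq> {}" "u \<in> X"
  shows "norm (closest_point X (u - v) - u) \<le> norm v"
  using closest_point_lipschitz[OF assms(1-3), of "u - v" u] closest_point_self[OF assms(4)]
  by (simp add: dist_norm)

lemma projected_steps_sq_dist_le:
  fixes p d :: "nat \<Rightarrow> 'a::{real_inner,heine_borel}"
  assumes "convex X" "closed X" "X \<noteq> {}" "y \<in> X"
    and step: "\<And>i. i \<in> {1..n} \<Longrightarrow> p i = closest_point X (p (i - 1) - a *\<^sub>R d i)"
  shows "(norm (p n - y))\<^sup>2 \<le> (norm (p 0 - y))\<^sup>2
           + (\<Sum>i\<in>{1..n}. a\<^sup>2 * (norm (d i))\<^sup>2 - 2 * a * (d i \<bullet> (p (i - 1) - y)))"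
proof (rule telescoping_le)
  fix i assume "i \<in> {1..n}"
  then show "(norm (p i - y))\<^sup>2 \<le> (norm (p (i - 1) - y))\<^sup>2
               + (a\<^sup>2 * (norm (d i))\<^sup>2 - 2 * a * (d i \<bullet> (p (i - 1) - y)))"
    using closest_point_step_sq_dist_le[OF assms(1-4), of "p (i - 1)" a "d i"] step by simp
qed

lemma projected_steps_drift_le:
  fixes p d :: "nat \<Rightarrow> 'a::{real_inner,heine_borel}"
  assumes "convex X" "closed X" "X \<noteq> {}" "p 0 \<in> X" "a \<ge> 0"
    and step: "\<And>i. i \<in> {1..n} \<Longrightarrow> p i = closest_point X (p (i - 1) - a *\<^sub>R d i)"
  shows "norm (p n - p 0) \<le> a * (\<Sum>i\<in>{1..n}. norm (d i))"
proof -
  have "norm (p i - p 0) \<le> norm (p (i - 1) - p 0) + a * norm (d i)" if i: "i \<in> {1..n}" for i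
  proof -
    have prev: "p (i - 1) \<in> X"
    proof (cases "i = 1")
      case False
      with i have "i - 1 \<in> {1..n}" by auto
      then show ?thesis using step closest_point_in_set[OF assms(2,3)] by simp
    qed (use assms(4) in simp)
    have "norm (p i - p (i - 1)) \<le> a * norm (d i)"
      using closest_point_step_dist_le[OF assms(1-3) prev, of "a *\<^sub>R d i"] step[OF i] \<open>a \<ge> 0\<close>
      by simp
    then show ?thesis
      using norm_triangle_ineq[of "p (i - 1) - p 0" "p i - p (i - 1)"] by simp
  qed
  then show ?thesis
    using telescoping_le[of n "\<lambda>i. norm (p i - p 0)"] by (simp add: sum_distrib_left)
qed

lemma inner_diff_bound:
  fixes p q z w y :: "'a::real_inner"
  shows "\<bar>p \<bullet> (z - y) - q \<bullet> (w - y)\<bar> \<le> norm p * norm (z - w) + norm (p - q) * norm (w - y)"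
proof -
  have "p \<bullet> (z - y) - q \<bullet> (w - y) = p \<bullet> (z - w) + (p - q) \<bullet> (w - y)"
    by (simp add: inner_diff_left inner_diff_right)
  then show ?thesis
    using Cauchy_Schwarz_ineq2[of p "z - w"] Cauchy_Schwarz_ineq2[of "p - q" "w - y"] by linarith
qed

lemma weighted_sum_ge_of_close:
  fixes a w :: "'b \<Rightarrow> real"
  assumes "finite A" and close: "\<And>j. j \<in> A \<Longrightarrow> \<bar>a j - c\<bar> \<le> e" and "e \<ge> 0"
    and "sum w A = M" and "(\<Sum>j\<in>A. \<bar>w j\<bar>) \<le> Mbar"
  shows "M * c - Mbar * e \<le> (\<Sum>j\<in>A. w j * a j)"
proof -
  have "- (w j * (a j - c)) \<le> \<bar>w j\<bar> * e" if "j \<in> A" for j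
  proof -
    have "- (w j * (a j - c)) \<le> \<bar>w j\<bar> * \<bar>a j - c\<bar>"
      using abs_ge_minus_self[of "w j * (a j - c)"] by (simp add: abs_mult)
    also have "\<dots> \<le> \<bar>w j\<bar> * e" using close[OF that] by (simp add: mult_left_mono)
    finally show ?thesis .
  qed
  then have "- (\<Sum>j\<in>A. w j * (a j - c)) \<le> (\<Sum>j\<in>A. \<bar>w j\<bar>) * e"
    by (simp add: sum_distrib_right flip: sum_negf) (rule sum_mono)
  also have "\<dots> \<le> Mbar * e" using assms(5) \<open>e \<ge> 0\<close> by (rule mult_right_mono)
  finally show ?thesis
    using assms(4) by (simp add: algebra_simps sum_subtractf sum_distrib_right flip: sum_distrib_left)
qed

lemma weighted_gradient_sum_ge:
  fixes z :: "'b \<Rightarrow> 'a::real_inner" and w :: "'b \<Rightarrow> nat \<Rightarrow> real"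
  assumes "finite A" "finite H" "\<rho> \<ge> 0" "M \<ge> 0"
    and convex: "\<And>h. h \<in> H \<Longrightarrow> convex_on UNIV (f h)"
    and deriv: "\<And>h. h \<in> H \<Longrightarrow> (f h has_derivative (\<lambda>v. g h c \<bullet> v)) (at c)"
    and bound: "\<And>h j. h \<in> H \<Longrightarrow> j \<in> A \<Longrightarrow> norm (g h (z j)) \<le> L h"
    and lip: "\<And>h j. h \<in> H \<Longrightarrow> j \<in> A \<Longrightarrow> norm (g h (z j) - g h c) \<le> N h * norm (z j - c)"
    and L_nonneg: "\<And>h. h \<in> H \<Longrightarrow> L h \<ge> 0" and N_nonneg: "\<And>h. h \<in> H \<Longrightarrow> N h \<ge> 0"
    and close: "\<And>j. j \<in> A \<Longrightarrow> norm (z j - c) \<le> \<rho>"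
    and sum_w: "\<And>h. h \<in> H \<Longrightarrow> (\<Sum>j\<in>A. w j h) = M"
    and sum_abs_w: "\<And>h. h \<in> H \<Longrightarrow> (\<Sum>j\<in>A. \<bar>w j h\<bar>) \<le> Mbar"
  shows "M * ((\<Sum>h\<in>H. f h c) - (\<Sum>h\<in>H. f h y))
           - Mbar * \<rho> * ((\<Sum>h\<in>H. L h) + (\<Sum>h\<in>H. N h) * norm (c - y))
         \<le> (\<Sum>j\<in>A. \<Sum>h\<in>H. w j h * (g h (z j) \<bullet> (z j - y)))"
proof -
  have per_function: "M * (f h c - f h y) - Mbar * ((L h + N h * norm (c - y)) * \<rho>)
      \<le> (\<Sum>j\<in>A. w j h * (g h (z j) \<bullet> (z j - y)))" if h: "h \<in> H" for h
  proof -
    have "\<bar>g h (z j) \<bullet> (z j - y) - g h c \<bullet> (c - y)\<bar> \<le> (L h + N h * norm (c - y)) * \<rho>"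
      if j: "j \<in> A" for j
    proof -
      have "norm (g h (z j)) * norm (z j - c) \<le> L h * \<rho>"
        using bound[OF h j] close[OF j] L_nonneg[OF h] by (simp add: mult_mono)
      moreover have "norm (g h (z j) - g h c) * norm (c - y) \<le> N h * \<rho> * norm (c - y)"
        using lip[OF h j] close[OF j] N_nonneg[OF h]
        by (intro mult_right_mono) (simp_all add: mult_left_mono order_trans)
      ultimately show ?thesis
        using inner_diff_bound[of "g h (z j)" "z j" y "g h c" c] by (simp add: algebra_simps)
    qed
    then have "M * (g h c \<bullet> (c - y)) - Mbar * ((L h + N h * norm (c - y)) * \<rho>)
        \<le> (\<Sum>j\<in>A. w j h * (g h (z j) \<bullet> (z j - y)))"
      using L_nonneg[OF h] N_nonneg[OF h] \<open>\<rho> \<ge> 0\<close>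
      by (intro weighted_sum_ge_of_close[OF \<open>finite A\<close> _ _ sum_w[OF h] sum_abs_w[OF h]]) auto
    moreover have "g h c \<bullet> (y - c) \<le> f h y - f h c"
      by (rule convex_on_above_tangent_inner[OF convex[OF h] deriv[OF h]])
    then have "M * (f h c - f h y) \<le> M * (g h c \<bullet> (c - y))"
      using \<open>M \<ge> 0\<close> by (intro mult_left_mono) (simp_all add: inner_diff_right)
    ultimately show ?thesis by linarith
  qed
  have "(\<Sum>h\<in>H. M * (f h c - f h y) - Mbar * ((L h + N h * norm (c - y)) * \<rho>))
      \<le> (\<Sum>h\<in>H. \<Sum>j\<in>A. w j h * (g h (z j) \<bullet> (z j - y)))"
    by (rule sum_mono) (rule per_function)
  then show ?thesis
    by (simp add: sum.swap[of _ H] sum_subtractf sum.distrib algebra_simps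
        flip: sum_distrib_left sum_distrib_right)
qed

lemma descent_recursion_arith:
  fixes a Mb Ls Ns dm \<eta> \<eta>' s r G DF M C1 :: real
  assumes sq: "\<eta>' \<le> \<eta> + a\<^sup>2 * C1 - 2 * a * G"
    and grad: "M * DF - Mb * (a * Mb * Ls + dm) * (Ls + Ns * r) \<le> G"
    and mean: "r\<^sup>2 \<le> \<eta> / s"
    and nonneg: "0 \<le> a" "0 \<le> Mb" "0 \<le> Ls" "0 \<le> Ns" "0 \<le> dm" "0 \<le> \<eta>" and "0 < s"
  shows "\<eta>' \<le> (1 + 1 / s * (2 * a\<^sup>2 * Mb\<^sup>2 * Ns * Ls + a * Mb * Ns * dm)) * \<eta> - 2 * a * M * DF
            + a\<^sup>2 * (C1 + 4 * (Mb * Ls)\<^sup>2 + 2 * Mb\<^sup>2 * Ns * Ls) + a * (Mb * (2 * Ls + Ns)) * dm"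
proof -
  define P where "P = a * (a * Mb * Ls + dm) * Mb * Ns"
  have "P \<ge> 0" unfolding P_def using nonneg by simp
  have "2 * P * r \<le> P + P * r\<^sup>2"
    using mult_left_mono[OF zero_le_power2[of "r - 1"] \<open>P \<ge> 0\<close>]
    by (simp add: power2_eq_square algebra_simps)
  also have "\<dots> \<le> P + P * (\<eta> / s)"
    using mult_left_mono[OF mean \<open>P \<ge> 0\<close>] by simp
  also have "P * (\<eta> / s) \<le> 1 / s * (2 * a\<^sup>2 * Mb\<^sup>2 * Ns * Ls + a * Mb * Ns * dm) * \<eta>"
  proof -
    have "1 / s * (2 * a\<^sup>2 * Mb\<^sup>2 * Ns * Ls + a * Mb * Ns * dm) * \<eta> - P * (\<eta> / s)
        = a\<^sup>2 * Mb\<^sup>2 * Ns * Ls * \<eta> / s"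
      unfolding P_def using \<open>0 < s\<close> by (simp add: field_simps power2_eq_square)
    moreover have "a\<^sup>2 * Mb\<^sup>2 * Ns * Ls * \<eta> / s \<ge> 0" using nonneg \<open>0 < s\<close> by simp
    ultimately show ?thesis by linarith
  qed
  finally have cross: "2 * P * r \<le> P + 1 / s * (2 * a\<^sup>2 * Mb\<^sup>2 * Ns * Ls + a * Mb * Ns * dm) * \<eta>"
    by simp
  have "2 * a * (M * DF - Mb * (a * Mb * Ls + dm) * (Ls + Ns * r)) \<le> 2 * a * G"
    using grad nonneg by (simp add: mult_left_mono)
  moreover have "2 * a * (Mb * (a * Mb * Ls + dm) * (Ls + Ns * r))
      = 2 * a\<^sup>2 * Mb\<^sup>2 * Ls\<^sup>2 + 2 * a * Mb * Ls * dm + 2 * P * r"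
    unfolding P_def by (simp add: power2_eq_square algebra_simps)
  moreover have "P = a\<^sup>2 * Mb\<^sup>2 * Ns * Ls + a * Mb * Ns * dm"
    unfolding P_def by (simp add: power2_eq_square algebra_simps)
  moreover have "a\<^sup>2 * Mb\<^sup>2 * Ls\<^sup>2 \<ge> 0" "a\<^sup>2 * Mb\<^sup>2 * Ns * Ls \<ge> 0" using nonneg by simp_all
  ultimately show ?thesis
    using sq cross by (simp add: power2_eq_square algebra_simps)
qed

text \<open>
  Only what the one-round bound uses is assumed: \<open>X\<close> closed rather than compact, the
  constants nonnegative rather than positive.
\<close>

locale interleaved_consensus_pgd =
  fixes S C \<Delta> :: nat
    and X :: "'a::{real_inner,heine_borel} set"
    and f :: "nat \<Rightarrow> 'a \<Rightarrow> real"
    and g :: "nat \<Rightarrow> 'a \<Rightarrow> 'a"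
    and L N :: "nat \<Rightarrow> real"
    and \<alpha> :: "nat \<Rightarrow> real"
    and W :: "nat \<Rightarrow> nat \<Rightarrow> nat \<Rightarrow> nat \<Rightarrow> real"
    and B :: "nat \<Rightarrow> nat \<Rightarrow> nat \<Rightarrow> real"
    and M Mbar :: real
    and x :: "nat \<Rightarrow> nat \<Rightarrow> nat \<Rightarrow> 'a"
  assumes S_pos: "S \<ge> 1" and Delta_pos: "\<Delta> \<ge> 1"
    and X_ne: "X \<noteq> {}" and X_convex: "convex X" and X_closed: "closed X"
    and f_deriv: "\<And>h z. h \<in> {1..C} \<Longrightarrow> (f h has_derivative (\<lambda>v. g h z \<bullet> v)) (at z)"
    and f_convex: "\<And>h. h \<in> {1..C} \<Longrightarrow> convex_on UNIV (f h)"
    and g_bound: "\<And>h z. h \<in> {1..C} \<Longrightarrow> z \<in> X \<Longrightarrow> norm (g h z) \<le> L h"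
    and N_nonneg: "\<And>h. h \<in> {1..C} \<Longrightarrow> N h \<ge> 0"
    and g_lip: "\<And>h z w. h \<in> {1..C} \<Longrightarrow> z \<in> X \<Longrightarrow> w \<in> X \<Longrightarrow>
                  norm (g h z - g h w) \<le> N h * norm (z - w)"
    and alpha_nonneg: "\<And>k. \<alpha> k \<ge> 0"
    and M_nonneg: "M \<ge> 0"
    and SLC: "\<And>k h. h \<in> {1..C} \<Longrightarrow> (\<Sum>i\<in>{1..\<Delta>}. \<Sum>J\<in>{1..S}. W (i - 1) k J h) = M"
    and Mbar_nonneg: "Mbar \<ge> 0"
    and BUC: "\<And>k h. h \<in> {1..C} \<Longrightarrow> (\<Sum>i\<in>{1..\<Delta>}. \<Sum>J\<in>{1..S}. \<bar>W (i - 1) k J h\<bar>) \<le> Mbar"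
    and B_nonneg: "\<And>k I J. I \<in> {1..S} \<Longrightarrow> J \<in> {1..S} \<Longrightarrow> B k I J \<ge> 0"
    and B_rows: "\<And>k I. I \<in> {1..S} \<Longrightarrow> (\<Sum>J\<in>{1..S}. B k I J) = 1"
    and B_cols: "\<And>k J. J \<in> {1..S} \<Longrightarrow> (\<Sum>I\<in>{1..S}. B k I J) = 1"
    and x_init: "\<And>J. J \<in> {1..S} \<Longrightarrow> x J 0 0 \<in> X"
    and x_step: "\<And>J i k. J \<in> {1..S} \<Longrightarrow> i \<in> {1..\<Delta>} \<Longrightarrow>
                  x J i k = closest_point X (x J (i - 1) k -
                    \<alpha> k *\<^sub>R (\<Sum>h\<in>{1..C}. W (i - 1) k J h *\<^sub>R g h (x J (i - 1) k)))"
    and x_cons: "\<And>I k. I \<in> {1..S} \<Longrightarrow> x I 0 (Suc k) = (\<Sum>J\<in>{1..S}. B k I J *\<^sub>R x J \<Delta> k)"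
begin

definition mean :: "nat \<Rightarrow> 'a"
  where "mean k = (1 / real S) *\<^sub>R (\<Sum>J\<in>{1..S}. x J 0 k)"

definition sq_dist_sum :: "'a \<Rightarrow> nat \<Rightarrow> real"
  where "sq_dist_sum y k = (\<Sum>J\<in>{1..S}. (norm (x J 0 k - y))\<^sup>2)"

definition max_disagreement :: "nat \<Rightarrow> real"
  where "max_disagreement k = Max ((\<lambda>J. norm (x J 0 k - mean k)) ` {1..S})"

definition direction :: "nat \<Rightarrow> nat \<Rightarrow> nat \<Rightarrow> 'a"
  where "direction J i k = (\<Sum>h\<in>{1..C}. W (i - 1) k J h *\<^sub>R g h (x J (i - 1) k))"

definition gradient_correlation :: "'a \<Rightarrow> nat \<Rightarrow> real"
  where "gradient_correlation y k =
    (\<Sum>(i, J)\<in>{1..\<Delta>} \<times> {1..S}. direction J i k \<bullet> (x J (i - 1) k - y))"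

lemma projected_step:
  "J \<in> {1..S} \<Longrightarrow> i \<in> {1..\<Delta>} \<Longrightarrow>
     x J i k = closest_point X (x J (i - 1) k - \<alpha> k *\<^sub>R direction J i k)"
  unfolding direction_def by (rule x_step)

lemma iterate_in_set:
  assumes "J \<in> {1..S}" "i \<le> \<Delta>"
  shows "x J i k \<in> X"
proof -
  have step_in: "x J i k \<in> X" if "J \<in> {1..S}" "i \<in> {1..\<Delta>}" for J i k
    using projected_step[OF that] closest_point_in_set[OF X_closed X_ne] by simp
  have "\<forall>J\<in>{1..S}. x J 0 k \<in> X"
  proof (induction k)
    case (Suc k)
    have "(\<Sum>J\<in>{1..S}. B k I J *\<^sub>R x J \<Delta> k) \<in> X" if "I \<in> {1..S}" for I
      using that B_rows B_nonneg step_in Delta_pos by (intro convex_sum[OF _ X_convex]) auto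
    then show ?case using x_cons by simp
  qed (use x_init in simp)
  then show ?thesis
    using assms step_in by (cases "i = 0") auto
qed

lemma L_nonneg:
  assumes "h \<in> {1..C}"
  shows "L h \<ge> 0"
proof -
  obtain z where "z \<in> X" using X_ne by blast
  then show ?thesis using order_trans[OF norm_ge_zero g_bound[OF assms]] by blast
qed

lemma sum_L_nonneg: "(\<Sum>h\<in>{1..C}. L h) \<ge> 0"
  by (rule sum_nonneg) (rule L_nonneg)

lemma norm_direction_le:
  assumes "J \<in> {1..S}" "i \<in> {1..\<Delta>}"
  shows "norm (direction J i k) \<le> (\<Sum>h\<in>{1..C}. \<bar>W (i - 1) k J h\<bar> * L h)"
proof -
  have "x J (i - 1) k \<in> X" using assms by (intro iterate_in_set) auto
  then show ?thesis
    unfolding direction_def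
    by (intro order_trans[OF norm_sum] sum_mono) (simp add: g_bound mult_left_mono)
qed

lemma direction_weights_le:
  assumes "J \<in> {1..S}"
  shows "(\<Sum>i\<in>{1..\<Delta>}. \<Sum>h\<in>{1..C}. \<bar>W (i - 1) k J h\<bar> * L h) \<le> Mbar * (\<Sum>h\<in>{1..C}. L h)"
proof -
  have "(\<Sum>i\<in>{1..\<Delta>}. \<Sum>h\<in>{1..C}. \<bar>W (i - 1) k J h\<bar> * L h)
      = (\<Sum>h\<in>{1..C}. (\<Sum>i\<in>{1..\<Delta>}. \<bar>W (i - 1) k J h\<bar>) * L h)"
    unfolding sum_distrib_right by (rule sum.swap)
  also have "\<dots> \<le> (\<Sum>h\<in>{1..C}. Mbar * L h)"
  proof (rule sum_mono)
    fix h assume h: "h \<in> {1..C}"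
    have "(\<Sum>i\<in>{1..\<Delta>}. \<bar>W (i - 1) k J h\<bar>) \<le> (\<Sum>i\<in>{1..\<Delta>}. \<Sum>J'\<in>{1..S}. \<bar>W (i - 1) k J' h\<bar>)"
      using assms by (intro sum_mono member_le_sum) auto
    also have "\<dots> \<le> Mbar" using BUC[OF h] .
    finally show "(\<Sum>i\<in>{1..\<Delta>}. \<bar>W (i - 1) k J h\<bar>) * L h \<le> Mbar * L h"
      using L_nonneg[OF h] by (rule mult_right_mono)
  qed
  finally show ?thesis by (simp add: sum_distrib_left)
qed

lemma mean_in_set: "mean k \<in> X"
proof -
  have "mean k = (\<Sum>J\<in>{1..S}. (1 / real S) *\<^sub>R x J 0 k)"
    unfolding mean_def by (simp add: scaleR_sum_right)
  also have "\<dots> \<in> X"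
    using S_pos iterate_in_set by (intro convex_sum[OF _ X_convex]) auto
  finally show ?thesis .
qed

lemma mean_sq_dist_le: "(norm (mean k - y))\<^sup>2 \<le> sq_dist_sum y k / real S"
proof -
  have "(\<Sum>J\<in>{1..S}. (1 / real S) *\<^sub>R y) = y"
    using S_pos by (simp add: sum_constant_scaleR)
  then have "mean k - y = (\<Sum>J\<in>{1..S}. (1 / real S) *\<^sub>R (x J 0 k - y))"
    by (simp add: mean_def scaleR_right_diff_distrib sum_subtractf scaleR_sum_right)
  then have "(norm (mean k - y))\<^sup>2 \<le> (\<Sum>J\<in>{1..S}. 1 / real S * (norm (x J 0 k - y))\<^sup>2)"
    using S_pos norm_sq_convex_combination_le[of "{1..S}" "\<lambda>_. 1 / real S"] by auto
  also have "\<dots> = sq_dist_sum y k / real S"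
    unfolding sq_dist_sum_def by (simp add: sum_divide_distrib)
  finally show ?thesis .
qed

lemma disagreement_le_max: "J \<in> {1..S} \<Longrightarrow> norm (x J 0 k - mean k) \<le> max_disagreement k"
  unfolding max_disagreement_def by (rule Max_ge) auto

lemma max_disagreement_nonneg: "max_disagreement k \<ge> 0"
  using order_trans[OF norm_ge_zero disagreement_le_max[of 1 k]] S_pos by simp

lemma drift_from_mean_le:
  assumes J: "J \<in> {1..S}" and i: "i \<in> {1..\<Delta>}"
  shows "norm (x J (i - 1) k - mean k) \<le> \<alpha> k * Mbar * (\<Sum>h\<in>{1..C}. L h) + max_disagreement k"
proof -
  have "norm (x J (i - 1) k - x J 0 k) \<le> \<alpha> k * (\<Sum>i'\<in>{1..i - 1}. norm (direction J i' k))"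
    using i projected_step[OF J] iterate_in_set[OF J]
    by (intro projected_steps_drift_le[OF X_convex X_closed X_ne _ alpha_nonneg]) auto
  also have "\<dots> \<le> \<alpha> k * (\<Sum>i'\<in>{1..\<Delta>}. \<Sum>h\<in>{1..C}. \<bar>W (i' - 1) k J h\<bar> * L h)"
  proof (intro mult_left_mono alpha_nonneg)
    have "(\<Sum>i'\<in>{1..i - 1}. norm (direction J i' k))
        \<le> (\<Sum>i'\<in>{1..i - 1}. \<Sum>h\<in>{1..C}. \<bar>W (i' - 1) k J h\<bar> * L h)"
      using i by (intro sum_mono norm_direction_le[OF J]) auto
    also have "\<dots> \<le> (\<Sum>i'\<in>{1..\<Delta>}. \<Sum>h\<in>{1..C}. \<bar>W (i' - 1) k J h\<bar> * L h)"
      using i L_nonneg by (intro sum_mono2 sum_nonneg mult_nonneg_nonneg) auto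
    finally show "(\<Sum>i'\<in>{1..i - 1}. norm (direction J i' k))
        \<le> (\<Sum>i'\<in>{1..\<Delta>}. \<Sum>h\<in>{1..C}. \<bar>W (i' - 1) k J h\<bar> * L h)" .
  qed
  also have "\<dots> \<le> \<alpha> k * Mbar * (\<Sum>h\<in>{1..C}. L h)"
    using direction_weights_le[OF J] alpha_nonneg by (simp add: mult_left_mono mult.assoc)
  finally show ?thesis
    using norm_triangle_ineq[of "x J (i - 1) k - x J 0 k" "x J 0 k - mean k"]
      disagreement_le_max[OF J, of k] by simp
qed

lemma consensus_sq_dist_le:
  "sq_dist_sum y (Suc k) \<le> (\<Sum>J\<in>{1..S}. (norm (x J \<Delta> k - y))\<^sup>2)"
proof -
  have "sq_dist_sum y (Suc k) = (\<Sum>I\<in>{1..S}. (norm ((\<Sum>J\<in>{1..S}. B k I J *\<^sub>R x J \<Delta> k) - y))\<^sup>2)"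
    unfolding sq_dist_sum_def by (rule sum.cong) (simp_all add: x_cons)
  also have "\<dots> \<le> (\<Sum>J\<in>{1..S}. (norm (x J \<Delta> k - y))\<^sup>2)"
    using B_nonneg B_rows B_cols by (intro doubly_stochastic_sum_sq_dist_le) auto
  finally show ?thesis .
qed

lemma local_phase_sq_dist_le:
  assumes "y \<in> X"
  shows "(\<Sum>J\<in>{1..S}. (norm (x J \<Delta> k - y))\<^sup>2)
           \<le> sq_dist_sum y k
             + (\<alpha> k)\<^sup>2 * (\<Sum>i\<in>{1..\<Delta>}. \<Sum>J\<in>{1..S}. (\<Sum>h\<in>{1..C}. \<bar>W (i - 1) k J h\<bar> * L h)\<^sup>2)
             - 2 * \<alpha> k * gradient_correlation y k"
proof -
  let ?c = "\<lambda>i J. \<Sum>h\<in>{1..C}. \<bar>W (i - 1) k J h\<bar> * L h"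
  let ?t = "\<lambda>i J. direction J i k \<bullet> (x J (i - 1) k - y)"
  have "(norm (x J \<Delta> k - y))\<^sup>2
      \<le> (norm (x J 0 k - y))\<^sup>2 + (\<Sum>i\<in>{1..\<Delta>}. (\<alpha> k)\<^sup>2 * (?c i J)\<^sup>2 - 2 * \<alpha> k * ?t i J)"
    if J: "J \<in> {1..S}" for J
  proof -
    have "(norm (direction J i k))\<^sup>2 \<le> (?c i J)\<^sup>2" if "i \<in> {1..\<Delta>}" for i
      using norm_direction_le[OF J that] by (simp add: power_mono)
    then have "(\<Sum>i\<in>{1..\<Delta>}. (\<alpha> k)\<^sup>2 * (norm (direction J i k))\<^sup>2 - 2 * \<alpha> k * ?t i J)
        \<le> (\<Sum>i\<in>{1..\<Delta>}. (\<alpha> k)\<^sup>2 * (?c i J)\<^sup>2 - 2 * \<alpha> k * ?t i J)"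
      by (intro sum_mono) (simp add: mult_left_mono)
    moreover have "(norm (x J \<Delta> k - y))\<^sup>2 \<le> (norm (x J 0 k - y))\<^sup>2
        + (\<Sum>i\<in>{1..\<Delta>}. (\<alpha> k)\<^sup>2 * (norm (direction J i k))\<^sup>2 - 2 * \<alpha> k * ?t i J)"
      using projected_step[OF J]
      by (intro projected_steps_sq_dist_le[OF X_convex X_closed X_ne assms])
    ultimately show ?thesis by linarith
  qed
  then have "(\<Sum>J\<in>{1..S}. (norm (x J \<Delta> k - y))\<^sup>2)
      \<le> (\<Sum>J\<in>{1..S}. (norm (x J 0 k - y))\<^sup>2 + (\<Sum>i\<in>{1..\<Delta>}. (\<alpha> k)\<^sup>2 * (?c i J)\<^sup>2 - 2 * \<alpha> k * ?t i J))"
    by (rule sum_mono)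
  also have "\<dots> = sq_dist_sum y k + (\<Sum>i\<in>{1..\<Delta>}. \<Sum>J\<in>{1..S}. (\<alpha> k)\<^sup>2 * (?c i J)\<^sup>2 - 2 * \<alpha> k * ?t i J)"
    unfolding sq_dist_sum_def sum.distrib by (subst sum.swap) (rule refl)
  also have "\<dots> = sq_dist_sum y k + (\<alpha> k)\<^sup>2 * (\<Sum>i\<in>{1..\<Delta>}. \<Sum>J\<in>{1..S}. (?c i J)\<^sup>2)
      - 2 * \<alpha> k * gradient_correlation y k"
    unfolding gradient_correlation_def sum.cartesian_product[symmetric]
    by (simp add: sum_subtractf sum_distrib_left)
  finally show ?thesis .
qed

lemma gradient_correlation_ge:
  "M * ((\<Sum>h\<in>{1..C}. f h (mean k)) - (\<Sum>h\<in>{1..C}. f h y))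
     - Mbar * (\<alpha> k * Mbar * (\<Sum>h\<in>{1..C}. L h) + max_disagreement k)
         * ((\<Sum>h\<in>{1..C}. L h) + (\<Sum>h\<in>{1..C}. N h) * norm (mean k - y))
   \<le> gradient_correlation y k"
proof -
  let ?A = "{1..\<Delta>} \<times> {1..S}"
  have "gradient_correlation y k
      = (\<Sum>(i, J)\<in>?A. \<Sum>h\<in>{1..C}. W (i - 1) k J h * (g h (x J (i - 1) k) \<bullet> (x J (i - 1) k - y)))"
    unfolding gradient_correlation_def direction_def by (simp add: inner_sum_left)
  moreover have "M * ((\<Sum>h\<in>{1..C}. f h (mean k)) - (\<Sum>h\<in>{1..C}. f h y))
     - Mbar * (\<alpha> k * Mbar * (\<Sum>h\<in>{1..C}. L h) + max_disagreement k)
         * ((\<Sum>h\<in>{1..C}. L h) + (\<Sum>h\<in>{1..C}. N h) * norm (mean k - y))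
    \<le> (\<Sum>j\<in>?A. \<Sum>h\<in>{1..C}. (case j of (i, J) \<Rightarrow> W (i - 1) k J h)
          * (g h (case j of (i, J) \<Rightarrow> x J (i - 1) k) \<bullet> ((case j of (i, J) \<Rightarrow> x J (i - 1) k) - y)))"
  proof (rule weighted_gradient_sum_ge)
    from sum_L_nonneg show "\<alpha> k * Mbar * (\<Sum>h\<in>{1..C}. L h) + max_disagreement k \<ge> 0"
      using alpha_nonneg Mbar_nonneg max_disagreement_nonneg by simp
    show "norm ((case j of (i, J) \<Rightarrow> x J (i - 1) k) - mean k)
        \<le> \<alpha> k * Mbar * (\<Sum>h\<in>{1..C}. L h) + max_disagreement k" if "j \<in> ?A" for j
      using that drift_from_mean_le by auto
    show "(\<Sum>j\<in>?A. case j of (i, J) \<Rightarrow> W (i - 1) k J h) = M" if "h \<in> {1..C}" for h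
      using SLC[OF that] by (simp add: sum.cartesian_product)
    show "(\<Sum>j\<in>?A. \<bar>case j of (i, J) \<Rightarrow> W (i - 1) k J h\<bar>) \<le> Mbar" if "h \<in> {1..C}" for h
      using BUC[OF that] by (simp add: sum.cartesian_product split_def)
  qed (use M_nonneg f_convex f_deriv g_bound g_lip L_nonneg N_nonneg iterate_in_set mean_in_set in auto)
  ultimately show ?thesis by (simp add: split_def)
qed

theorem round_descent:
  assumes y_in: "y \<in> X"
  shows
    "let Lsum = (\<Sum>h\<in>{1..C}. L h);
         Nsum = (\<Sum>h\<in>{1..C}. N h);
         F = (\<lambda>z. \<Sum>h\<in>{1..C}. f h z);
         xbar = (\<lambda>k. (1 / real S) *\<^sub>R (\<Sum>J\<in>{1..S}. x J 0 k));
         \<eta>sq = (\<lambda>k. \<Sum>J\<in>{1..S}. (norm (x J 0 k - y))\<^sup>2);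
         dmax = Max ((\<lambda>J. norm (x J 0 k - xbar k)) ` {1..S});
         \<gamma> = (1 / real S) * (2 * (\<alpha> k)\<^sup>2 * Mbar\<^sup>2 * Nsum * Lsum + \<alpha> k * Mbar * Nsum * dmax);
         C1sq = (\<Sum>i\<in>{1..\<Delta>}. \<Sum>J\<in>{1..S}. (\<Sum>h\<in>{1..C}. \<bar>W (i - 1) k J h\<bar> * L h)\<^sup>2);
         C2sq = 4 * (Mbar * Lsum)\<^sup>2;
         C3sq = 2 * Mbar\<^sup>2 * Nsum * Lsum;
         C4 = Mbar * (2 * Lsum + Nsum)
     in \<eta>sq (Suc k) \<le> (1 + \<gamma>) * \<eta>sq k - 2 * \<alpha> k * M * (F (xbar k) - F y)
          + (\<alpha> k)\<^sup>2 * (C1sq + C2sq + C3sq) + \<alpha> k * C4 * dmax"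
proof -
  have "sq_dist_sum y (Suc k) \<le> sq_dist_sum y k
      + (\<alpha> k)\<^sup>2 * (\<Sum>i\<in>{1..\<Delta>}. \<Sum>J\<in>{1..S}. (\<Sum>h\<in>{1..C}. \<bar>W (i - 1) k J h\<bar> * L h)\<^sup>2)
      - 2 * \<alpha> k * gradient_correlation y k"
    using consensus_sq_dist_le local_phase_sq_dist_le[OF y_in] by (rule order_trans)
  moreover have "(\<Sum>h\<in>{1..C}. N h) \<ge> 0"
    by (rule sum_nonneg) (rule N_nonneg)
  moreover have "sq_dist_sum y k \<ge> 0" "real S > 0"
    using S_pos by (simp_all add: sq_dist_sum_def sum_nonneg)
  ultimately show ?thesis
    using descent_recursion_arith[OF _ gradient_correlation_ge mean_sq_dist_le alpha_nonneg Mbar_nonneg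
        sum_L_nonneg _ max_disagreement_nonneg]
    unfolding Let_def sq_dist_sum_def max_disagreement_def mean_def by simp
qed

end

theorem lemma3:
  fixes S C \<Delta> :: nat
    and X :: "'a::euclidean_space set"
    and f :: "nat \<Rightarrow> 'a \<Rightarrow> real"
    and g :: "nat \<Rightarrow> 'a \<Rightarrow> 'a"
    and L N :: "nat \<Rightarrow> real"
    and \<alpha> :: "nat \<Rightarrow> real"
    and W :: "nat \<Rightarrow> nat \<Rightarrow> nat \<Rightarrow> nat \<Rightarrow> real"
    and B :: "nat \<Rightarrow> nat \<Rightarrow> nat \<Rightarrow> real"
    and M Mbar :: real
    and x :: "nat \<Rightarrow> nat \<Rightarrow> nat \<Rightarrow> 'a"
    and y :: 'a
    and k :: nat
  assumes S_pos: "S \<ge> 1" and C_pos: "C \<ge> 1" and Delta_pos: "\<Delta> \<ge> 1"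
    and X_ne: "X \<noteq> {}" and X_convex: "convex X" and X_compact: "compact X"
    and f_deriv: "\<And>h z. h \<in> {1..C} \<Longrightarrow> (f h has_derivative (\<lambda>v. g h z \<bullet> v)) (at z)"
    and g_cont: "\<And>h. h \<in> {1..C} \<Longrightarrow> continuous_on UNIV (g h)"
    and f_convex: "\<And>h. h \<in> {1..C} \<Longrightarrow> convex_on UNIV (f h)"
    and g_bound: "\<And>h z. h \<in> {1..C} \<Longrightarrow> z \<in> X \<Longrightarrow> norm (g h z) \<le> L h"
    and N_pos: "\<And>h. h \<in> {1..C} \<Longrightarrow> N h > 0"
    and g_lip: "\<And>h z w. h \<in> {1..C} \<Longrightarrow> z \<in> X \<Longrightarrow> w \<in> X \<Longrightarrow>
                  norm (g h z - g h w) \<le> N h * norm (z - w)"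
    and alpha_pos: "\<And>k. \<alpha> k > 0"
    and M_pos: "M > 0"
    and SLC: "\<And>k h. h \<in> {1..C} \<Longrightarrow>
                (\<Sum>i\<in>{1..\<Delta>}. \<Sum>J\<in>{1..S}. W (i - 1) k J h) = M"
    and Mbar_pos: "Mbar > 0"
    and BUC: "\<And>k h. h \<in> {1..C} \<Longrightarrow>
                (\<Sum>i\<in>{1..\<Delta>}. \<Sum>J\<in>{1..S}. \<bar>W (i - 1) k J h\<bar>) \<le> Mbar"
    and B_nonneg: "\<And>k I J. I \<in> {1..S} \<Longrightarrow> J \<in> {1..S} \<Longrightarrow> B k I J \<ge> 0"
    and B_rows: "\<And>k I. I \<in> {1..S} \<Longrightarrow> (\<Sum>J\<in>{1..S}. B k I J) = 1"
    and B_cols: "\<And>k J. J \<in> {1..S} \<Longrightarrow> (\<Sum>I\<in>{1..S}. B k I J) = 1"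
    and x_init: "\<And>J. J \<in> {1..S} \<Longrightarrow> x J 0 0 \<in> X"
    and x_step: "\<And>J i k. J \<in> {1..S} \<Longrightarrow> i \<in> {1..\<Delta>} \<Longrightarrow>
                  x J i k = closest_point X (x J (i - 1) k -
                    \<alpha> k *\<^sub>R (\<Sum>h\<in>{1..C}. W (i - 1) k J h *\<^sub>R g h (x J (i - 1) k)))"
    and x_cons: "\<And>I k. I \<in> {1..S} \<Longrightarrow>
                  x I 0 (Suc k) = (\<Sum>J\<in>{1..S}. B k I J *\<^sub>R x J \<Delta> k)"
    and y_in: "y \<in> X"
  shows
    "let Lsum = (\<Sum>h\<in>{1..C}. L h);
         Nsum = (\<Sum>h\<in>{1..C}. N h);
         F = (\<lambda>z. \<Sum>h\<in>{1..C}. f h z);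
         xbar = (\<lambda>k. (1 / real S) *\<^sub>R (\<Sum>J\<in>{1..S}. x J 0 k));
         \<eta>sq = (\<lambda>k. \<Sum>J\<in>{1..S}. (norm (x J 0 k - y))\<^sup>2);
         dmax = Max ((\<lambda>J. norm (x J 0 k - xbar k)) ` {1..S});
         \<gamma> = (1 / real S) * (2 * (\<alpha> k)\<^sup>2 * Mbar\<^sup>2 * Nsum * Lsum + \<alpha> k * Mbar * Nsum * dmax);
         C1sq = (\<Sum>i\<in>{1..\<Delta>}. \<Sum>J\<in>{1..S}. (\<Sum>h\<in>{1..C}. \<bar>W (i - 1) k J h\<bar> * L h)\<^sup>2);
         C2sq = 4 * (Mbar * Lsum)\<^sup>2;
         C3sq = 2 * Mbar\<^sup>2 * Nsum * Lsum;
         C4 = Mbar * (2 * Lsum + Nsum)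
     in \<eta>sq (Suc k) \<le> (1 + \<gamma>) * \<eta>sq k - 2 * \<alpha> k * M * (F (xbar k) - F y)
          + (\<alpha> k)\<^sup>2 * (C1sq + C2sq + C3sq) + \<alpha> k * C4 * dmax"
proof -
  have "closed X" using X_compact by (rule compact_imp_closed)
  moreover have "\<And>h. h \<in> {1..C} \<Longrightarrow> N h \<ge> 0" "\<And>k. \<alpha> k \<ge> 0" "M \<ge> 0" "Mbar \<ge> 0"
    using N_pos alpha_pos M_pos Mbar_pos by (simp_all add: less_imp_le)
  ultimately interpret interleaved_consensus_pgd S C \<Delta> X f g L N \<alpha> W B M Mbar x
    using S_pos Delta_pos X_ne X_convex f_deriv f_convex g_bound g_lip SLC BUC
      B_nonneg B_rows B_cols x_init x_step x_cons
    by unfold_locales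
  show ?thesis by (rule round_descent[OF y_in])
qed

end
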